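(* Let $1\le e\le N$ and $1\le i<j\le n$. Then $w_{R,e,i,j}\equiv a_{R,i,j}^{p^{e-1}}\pmod{\mathfrak m_{K_R}^{-p^{e-1}\mu_{i,j}+1}}$ and $v_{K_R}(w_{R,e,i,j})\ge -p^{e-1}\mu_{i,j}$, with equality if and only if $m_{i,j}=\mu_{i,j}$. Moreover $w^*_{R,e,i,j}\equiv (a^*_{R,i,j})^{p^{e-1}}\pmod{\mathfrak m_{K_R}^{-p^{e-1}\mu_{i,j}+1}}$ and $v_{K_R}(w^*_{R,e,i,j})\ge -p^{e-1}\mu_{i,j}$, with equality if and only if $v_K(a^*_{i,j})=-\mu_{i,j}$.
   Context: Let $p$ be a prime and $K$ a complete discrete valuation field of characteristic $p$ with algebraically closed residue field $k$, normalized valuation $v_K$. Fix $t\in K$ with $v_K(t)=-1$; every $x\in K$ is uniquely $\sum_{l\ge v_K(x)}x_lt^{-l}$ with $x_l\in k$, and $\mathrm{coef}_{K,l}(x)=x_l$. $UT_n(F)$ denotes upper unitriangular $n\times n$ matrices over $F$; $X^{(p^m)}$ raises every entry of $X$ to the $p^m$-th power. For $X=(x_{i,j})\in UT_n(K)$ put $v_K(X)=\min_{i<j}v_K(x_{i,j})/(j-i)$. Let $n\ge2$ and $L/K$ a totally wildly ramified finite Galois extension with $\mathrm{Gal}(L/K)\cong UT_n(\mathbb F_p)$. Fix $A=(a_{i,j})\in UT_n(K)$ with $\mathrm{coef}_{K,l}(a_{i,j})=0$ for all $i<j$ and $l\in p\mathbb Z\cup\mathbb Z_{\ge0}$, such that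 $X^{(p)}A=X$ has a solution $\Theta\in UT_n(L)$ whose entries generate $L$ over $K$. Let $a^*_{i,j}$ denote the entries of $A^{-1}$. Put $m_A=-v_K(A)$, fix an integer $N>\log_p\big(n(p^{n(n-1)/2}+1)m_A+p\big)+\frac{n(n-1)}2$ and $q=p^N$. For a positive integer $R$ prime to $p$ let $K_R=K(T)$ with $T^q+T^{q-1}=t^R$, with normalized valuation $v_{K_R}$ and maximal ideal $\mathfrak m_{K_R}$; for an integer $a$, $\mathfrak m_{K_R}^{a}=\{x\in K_R: v_{K_R}(x)\ge a\}$. Let $t_R\in\overline K$ be the $qR$-th root of $t^R(1+T^{-1})^{-1}$ congruent to $t^{1/q}$ modulo $t^{1/q}\mathfrak m_{\overline K}$ (so $t_R\in K_R$, $v_{K_R}(t_R)=-1$). Let $\iota_R:K\to K_R$ be the ring isomorphism $\sum_lx_lt^{-l}\mapsto\sum_lx_l^{1/q}t_R^{-l}$, applied entrywise. Put $A_R=\iota_R(A)=(a_{R,i,j})$, let $a^*_{R,i,j}$ denote the entries of $A_R^{-1}$, and let $W_{R,0}=I$, $W_{R,e}=A_R^{(p^{e-1})}W_{R,e-1}$ ($1\le e\le N$), with entries $w_{R,e,i,j}$; $w^*_{R,e,i,j}$ are the entries of $W_{R,e}^{-1}$. For $1\le i<j\le n$ let $m_{i,j}=-v_K(a_{i,j})$ ($=-\infty$ if $a_{i,j}=0$). A partition for $(i,j)$ is a sequence of integers $i=\lambda_0<\lambda_1<\dots<\lambda_s=j$, of length $|\lambda|=s$; $m_\lambda=\sum_{u=0}^{|\lambda|-1}m_{\lambda_u,\lambda_{u+1}}$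 and $\mu_{i,j}=\max m_\lambda$ over all partitions for $(i,j)$. *)

theory Defs
  imports "HOL-Computational_Algebra.Polynomial" "HOL-Computational_Algebra.Formal_Laurent_Series"
    "HOL-Library.Extended_Real"
begin

text \<open>Elements of K (resp. K_R) are Laurent series over the residue field k in the
 uniformizer X = t^(-1) (resp. t_R^(-1)): x = sum_l x_l t^(-l) corresponds to the fls with
 nth coefficient x_l.  Matrices are functions nat => nat => _, indices 1..n.\<close>

definition val :: "'k::field fls \<Rightarrow> ereal" where
  "val x = (if x = 0 then \<infinity> else ereal (real_of_int (fls_subdegree x)))"

definition coef :: "'k::field fls \<Rightarrow> int \<Rightarrow> 'k" where
  "coef x l = fls_nth x l"

definition idm :: "nat \<Rightarrow> nat \<Rightarrow> 'a::{zero,one}" where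
  "idm i j = (if i = j then 1 else 0)"

definition mat_mul :: "nat \<Rightarrow> (nat \<Rightarrow> nat \<Rightarrow> 'a::comm_ring_1) \<Rightarrow> (nat \<Rightarrow> nat \<Rightarrow> 'a) \<Rightarrow> nat \<Rightarrow> nat \<Rightarrow> 'a" where
  "mat_mul n X Y = (\<lambda>i j. \<Sum>k\<in>{1..n}. X i k * Y k j)"

definition is_UT :: "nat \<Rightarrow> (nat \<Rightarrow> nat \<Rightarrow> 'a::{zero,one}) \<Rightarrow> bool" where
  "is_UT n X \<longleftrightarrow> (\<forall>i\<in>{1..n}. \<forall>j\<in>{1..n}. (i = j \<longrightarrow> X i j = 1) \<and> (j < i \<longrightarrow> X i j = 0))"

definition mat_inv :: "nat \<Rightarrow> (nat \<Rightarrow> nat \<Rightarrow> 'a::comm_ring_1) \<Rightarrow> nat \<Rightarrow> nat \<Rightarrow> 'a" where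
  "mat_inv n X = (THE Y. (\<forall>i\<in>{1..n}. \<forall>j\<in>{1..n}. mat_mul n X Y i j = idm i j)
                        \<and> (\<forall>i j. \<not> (i \<in> {1..n} \<and> j \<in> {1..n}) \<longrightarrow> Y i j = 0))"

definition frob :: "nat \<Rightarrow> nat \<Rightarrow> (nat \<Rightarrow> nat \<Rightarrow> 'a::comm_ring_1) \<Rightarrow> nat \<Rightarrow> nat \<Rightarrow> 'a" where
  "frob p m X = (\<lambda>i j. X i j ^ (p ^ m))"

definition qroot :: "nat \<Rightarrow> 'k::field \<Rightarrow> 'k" where
  "qroot q c = (THE y. y ^ q = c)"

definition iota :: "nat \<Rightarrow> 'k::field fls \<Rightarrow> 'k fls" where
  "iota q x = Abs_fls (\<lambda>l. qroot q (fls_nth x l))"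

primrec Wseq :: "nat \<Rightarrow> nat \<Rightarrow> (nat \<Rightarrow> nat \<Rightarrow> 'a::comm_ring_1) \<Rightarrow> nat \<Rightarrow> nat \<Rightarrow> nat \<Rightarrow> 'a" where
  "Wseq p n B 0 = idm"
| "Wseq p n B (Suc e) = mat_mul n (frob p e B) (Wseq p n B e)"

definition vUT :: "nat \<Rightarrow> (nat \<Rightarrow> nat \<Rightarrow> 'k::field fls) \<Rightarrow> ereal" where
  "vUT n X = Min {val (X i j) / ereal (real (j - i)) | i j. 1 \<le> i \<and> i < j \<and> j \<le> n}"

definition partitions :: "nat \<Rightarrow> nat \<Rightarrow> nat list set" where
  "partitions i j = {ls. ls \<noteq> [] \<and> hd ls = i \<and> last ls = j \<and> sorted_wrt (<) ls}"

definition mexp :: "(nat \<Rightarrow> nat \<Rightarrow> 'k::field fls) \<Rightarrow> nat \<Rightarrow> nat \<Rightarrow> ereal" where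
  "mexp A i j = - val (A i j)"

definition m_part :: "(nat \<Rightarrow> nat \<Rightarrow> 'k::field fls) \<Rightarrow> nat list \<Rightarrow> ereal" where
  "m_part A ls = (\<Sum>u<length ls - 1. mexp A (ls ! u) (ls ! (u + 1)))"

definition mu :: "(nat \<Rightarrow> nat \<Rightarrow> 'k::field fls) \<Rightarrow> nat \<Rightarrow> nat \<Rightarrow> ereal" where
  "mu A i j = Max (m_part A ` partitions i j)"

end

theory Submission
  imports Defs
begin

text \<open>
  Put \<open>B = A\<^sub>R\<close>. Its entries satisfy \<open>- \<mu> i j \<le> val (B i j)\<close>, where \<open>\<mu>\<close> is superadditive
  (\<open>\<mu> i k + \<mu> k j \<le> \<mu> i j\<close>, by concatenating partitions) and every finite \<open>\<mu> i j\<close> is a positive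
  integer, because the entries of \<open>A\<close> have no terms of non-negative degree. For unitriangular
  \<open>X\<close> and \<open>Y\<close> the entry \<open>(X Y) i j\<close> is \<open>X i j + Y i j\<close> plus the middle terms \<open>X i k * Y k j\<close>,
  \<open>i < k < j\<close>. If the entries of \<open>X\<close> and \<open>Y\<close> have valuations at least \<open>- a \<mu>\<close> and \<open>- b \<mu>\<close>
  with \<open>a \<noteq> b\<close>, superadditivity and \<open>\<mu> \<ge> 1\<close> put every middle term, and the entry of the
  factor with the smaller scale, strictly above \<open>- max a b \<mu> i j\<close>. Applied to
  \<open>W (e + 1) = B\<^bsup>(p^e)\<^esup> W e\<close> this gives \<open>W (e + 1) i j \<equiv> B i j ^ p ^ e\<close> modulo higher order terms.
  The inverse \<open>(W e)\<^sup>-\<^sup>1 = B\<^sup>-\<^sup>1 (B\<^sup>-\<^sup>1)\<^bsup>(p)\<^esup> \<cdots> (B\<^sup>-\<^sup>1)\<^bsup>(p^(e-1))\<^esup>\<close> is treated in the same way,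
  once back substitution shows that \<open>B\<^sup>-\<^sup>1\<close> obeys the same bound as \<open>B\<close>. The equality cases
  follow by comparing leading terms. Finally \<open>\<iota>\<^sub>R\<close> only takes \<open>q\<close>-th roots of coefficients, so
  it is a ring embedding that preserves valuations and commutes with matrix inversion.
\<close>

section \<open>Valuation bounds\<close>

definition val_ge :: "'a::field fls \<Rightarrow> int \<Rightarrow> bool" where
  "val_ge x r \<longleftrightarrow> x = 0 \<or> r \<le> fls_subdegree x"

lemma val_ge_iff: "val_ge x r \<longleftrightarrow> ereal (of_int r) \<le> val x"
  by (auto simp: val_ge_def val_def)

lemma val_eq_iff: "val x = ereal (of_int r) \<longleftrightarrow> x \<noteq> 0 \<and> fls_subdegree x = r"
  by (auto simp: val_def)

lemma val_ge_0 [simp]: "val_ge 0 r"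
  by (simp add: val_ge_def)

lemma val_ge_mono: "val_ge x r \<Longrightarrow> r' \<le> r \<Longrightarrow> val_ge x r'"
  by (auto simp: val_ge_def)

lemma val_ge_add: "val_ge x r \<Longrightarrow> val_ge y r \<Longrightarrow> val_ge (x + y) r"
  unfolding val_ge_def using fls_plus_subdegree[of x y] by force

lemma val_ge_uminus [simp]: "val_ge (- x) r = val_ge x r"
  by (simp add: val_ge_def)

lemma val_ge_mult: "val_ge x r \<Longrightarrow> val_ge y s \<Longrightarrow> val_ge (x * y) (r + s)"
  by (cases "x = 0"; cases "y = 0") (auto simp: val_ge_def)

lemma val_ge_power: "val_ge x r \<Longrightarrow> val_ge (x ^ k) (int k * r)"
  by (cases "k = 0") (auto simp: val_ge_def fls_subdegree_pow mult_left_mono zero_power)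

lemma val_power_add_eq_iff:
  fixes x d :: "'a::field fls"
  assumes x: "val_ge x (- m)" and d: "val_ge d (- (int P * m) + 1)" and "P > 0"
  shows "val (x ^ P + d) = ereal (of_int (- (int P * m))) \<longleftrightarrow> val x = ereal (of_int (- m))"
  unfolding val_eq_iff
proof
  assume "x \<noteq> 0 \<and> fls_subdegree x = - m"
  hence xP: "x ^ P \<noteq> 0" "fls_subdegree (x ^ P) = - (int P * m)"
    by (auto simp: fls_subdegree_pow)
  show "x ^ P + d \<noteq> 0 \<and> fls_subdegree (x ^ P + d) = - (int P * m)"
  proof (cases "d = 0")
    case False
    hence lt: "fls_subdegree (x ^ P) < fls_subdegree d"
      using d xP by (simp add: val_ge_def)
    hence "x ^ P + d \<noteq> 0"
      by (auto simp: add_eq_0_iff)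
    thus ?thesis
      using fls_subdegree_add_eq1[OF xP(1) lt] xP by simp
  qed (use xP in simp)
next
  assume lead: "x ^ P + d \<noteq> 0 \<and> fls_subdegree (x ^ P + d) = - (int P * m)"
  show "x \<noteq> 0 \<and> fls_subdegree x = - m"
  proof (rule ccontr)
    assume "\<not> (x \<noteq> 0 \<and> fls_subdegree x = - m)"
    hence "val_ge x (- m + 1)"
      using x by (auto simp: val_ge_def)
    hence "val_ge (x ^ P) (- (int P * m) + 1)"
      by (rule val_ge_mono[OF val_ge_power]) (use \<open>P > 0\<close> in \<open>simp add: algebra_simps\<close>)
    hence "val_ge (x ^ P + d) (- (int P * m) + 1)"
      using d by (rule val_ge_add)
    thus False
      using lead by (simp add: val_ge_def)
  qed
qed

section \<open>Unitriangular matrices\<close>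

lemma is_UT_diag: "is_UT n X \<Longrightarrow> i \<in> {1..n} \<Longrightarrow> X i i = 1"
  by (auto simp: is_UT_def)

lemma is_UT_below_diag: "is_UT n X \<Longrightarrow> i \<in> {1..n} \<Longrightarrow> j \<in> {1..n} \<Longrightarrow> j < i \<Longrightarrow> X i j = 0"
  by (auto simp: is_UT_def)

lemma mat_mul_UT_entry:
  assumes "is_UT n X" "is_UT n Y" "i \<in> {1..n}" "j \<in> {1..n}"
  shows "mat_mul n X Y i j = (\<Sum>k\<in>{i..j}. X i k * Y k j)"
  unfolding mat_mul_def
  by (rule sum.mono_neutral_right) (use assms in \<open>auto simp: is_UT_def\<close>)

lemma mat_mul_UT_entry_above_diag:
  assumes "is_UT n X" "is_UT n Y" "1 \<le> i" "i < j" "j \<le> n"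
  shows "mat_mul n X Y i j = X i j + Y i j + (\<Sum>k\<in>{i<..<j}. X i k * Y k j)"
proof -
  have "{i..j} = insert i (insert j {i<..<j})"
    using assms by auto
  thus ?thesis
    using assms by (simp add: mat_mul_UT_entry is_UT_diag add.assoc)
qed

lemma is_UT_mat_mul: "is_UT n X \<Longrightarrow> is_UT n Y \<Longrightarrow> is_UT n (mat_mul n X Y)"
  unfolding is_UT_def[of n "mat_mul n X Y"] by (auto simp: mat_mul_UT_entry is_UT_diag)

lemma is_UT_idm: "is_UT n idm"
  by (auto simp: is_UT_def idm_def)

lemma is_UT_frob: "p > 0 \<Longrightarrow> is_UT n X \<Longrightarrow> is_UT n (frob p e X)"
  by (auto simp: is_UT_def frob_def zero_power)

lemma is_UT_Wseq: "p > 0 \<Longrightarrow> is_UT n B \<Longrightarrow> is_UT n (Wseq p n B e)"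
  by (induction e) (auto intro: is_UT_mat_mul is_UT_frob is_UT_idm)

lemma mat_mul_assoc: "mat_mul n (mat_mul n X Y) Z = mat_mul n X (mat_mul n Y Z)"
  unfolding mat_mul_def
  by (auto simp: fun_eq_iff sum_distrib_left sum_distrib_right mult.assoc intro: sum.swap)

lemma mat_mul_cong:
  "(\<And>k. k \<in> {1..n} \<Longrightarrow> X i k = X' i k) \<Longrightarrow> (\<And>k. k \<in> {1..n} \<Longrightarrow> Y k j = Y' k j) \<Longrightarrow>
    mat_mul n X Y i j = mat_mul n X' Y' i j"
  unfolding mat_mul_def by (rule sum.cong) auto

lemma mat_mul_idm_left: "i \<in> {1..n} \<Longrightarrow> mat_mul n idm X i j = X i j"
  unfolding mat_mul_def idm_def by (simp add: if_distrib[of "\<lambda>c. c * _"] sum.delta cong: if_cong)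

lemma mat_mul_idm_left_outside: "i \<notin> {1..n} \<Longrightarrow> mat_mul n idm X i j = 0"
  unfolding mat_mul_def idm_def by (rule sum.neutral) auto

lemma UT_mat_mul_column_eq_0:
  assumes "is_UT n X" "j \<in> {1..n}" "\<And>i. i \<in> {1..n} \<Longrightarrow> mat_mul n X D i j = 0"
  shows "i \<in> {1..n} \<Longrightarrow> D i j = 0"
proof (induction "n - i" arbitrary: i rule: less_induct)
  case less
  have "mat_mul n X D i j = (\<Sum>k\<in>{1..n}. if k = i then D i j else 0)"
    unfolding mat_mul_def
  proof (rule sum.cong)
    fix k assume k: "k \<in> {1..n}"
    consider "k < i" | "k = i" | "i < k" by linarith
    thus "X i k * D k j = (if k = i then D i j else 0)"
    proof cases
      case 3
      hence "D k j = 0"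
        using less.hyps k by auto
      thus ?thesis using 3 by simp
    qed (use assms(1) less.prems k in \<open>auto simp: is_UT_diag is_UT_below_diag\<close>)
  qed simp
  thus ?case
    using assms(3) less.prems by simp
qed

lemma mat_inv_eqI:
  assumes UT: "is_UT n X"
    and inv: "\<And>i j. i \<in> {1..n} \<Longrightarrow> j \<in> {1..n} \<Longrightarrow> mat_mul n X Y i j = idm i j"
    and outside: "\<And>i j. \<not> (i \<in> {1..n} \<and> j \<in> {1..n}) \<Longrightarrow> Y i j = 0"
  shows "mat_inv n X = Y"
  unfolding mat_inv_def
proof (rule the_equality)
  fix Y'
  assume Y': "(\<forall>i\<in>{1..n}. \<forall>j\<in>{1..n}. mat_mul n X Y' i j = idm i j)
    \<and> (\<forall>i j. \<not> (i \<in> {1..n} \<and> j \<in> {1..n}) \<longrightarrow> Y' i j = 0)"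
  have "Y' i j - Y i j = 0" if "i \<in> {1..n}" "j \<in> {1..n}" for i j
  proof (rule UT_mat_mul_column_eq_0[OF UT that(2) _ that(1)])
    fix i assume "i \<in> {1..n}"
    thus "mat_mul n X (\<lambda>a b. Y' a b - Y a b) i j = 0"
      using Y' inv[of i j] that(2) by (simp add: mat_mul_def right_diff_distrib sum_subtractf)
  qed
  moreover have "Y' i j = Y i j" if "\<not> (i \<in> {1..n} \<and> j \<in> {1..n})" for i j
    using Y' outside that by simp
  ultimately show "Y' = Y"
    by (metis right_minus_eq ext)
qed (use inv outside in simp)

function UT_inv :: "(nat \<Rightarrow> nat \<Rightarrow> 'a::comm_ring_1) \<Rightarrow> nat \<Rightarrow> nat \<Rightarrow> 'a" where
  "UT_inv X i j =
    (if i < j then - (\<Sum>k\<in>{i<..j}. X i k * UT_inv X k j) else if i = j then 1 else 0)"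
  by auto
termination by (relation "measure (\<lambda>(X, i, j). j - i)") auto

declare UT_inv.simps [simp del]

lemma UT_right_inverse_exists:
  assumes UT: "is_UT n X"
  shows "\<exists>Y. is_UT n Y \<and> (\<forall>i\<in>{1..n}. \<forall>j\<in>{1..n}. mat_mul n X Y i j = idm i j)
    \<and> (\<forall>i j. \<not> (i \<in> {1..n} \<and> j \<in> {1..n}) \<longrightarrow> Y i j = 0)"
proof (intro exI conjI ballI allI impI)
  define Y where "Y = (\<lambda>i j. if i \<in> {1..n} \<and> j \<in> {1..n} then UT_inv X i j else (0::'a))"
  show UTY: "is_UT n Y"
    by (auto simp: is_UT_def UT_inv.simps Y_def)
  fix i j
  show "\<not> (i \<in> {1..n} \<and> j \<in> {1..n}) \<Longrightarrow> Y i j = 0"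
    unfolding Y_def by presburger
  assume ij: "i \<in> {1..n}" "j \<in> {1..n}"
  have "mat_mul n X Y i j = (\<Sum>k\<in>{i..j}. X i k * UT_inv X k j)"
    using mat_mul_UT_entry[OF UT UTY ij] ij by (auto simp: Y_def intro!: sum.cong)
  also have "\<dots> = idm i j"
  proof (cases "i < j")
    case True
    hence "{i..j} = insert i {i<..j}" by auto
    thus ?thesis
      using True is_UT_diag[OF UT ij(1)] by (simp add: idm_def UT_inv.simps[of X i j])
  qed (use is_UT_diag[OF UT ij(1)] in \<open>auto simp: idm_def UT_inv.simps\<close>)
  finally show "mat_mul n X Y i j = idm i j" .
qed

lemma mat_inv_UT:
  assumes "is_UT n X"
  shows is_UT_mat_inv: "is_UT n (mat_inv n X)"
    and mat_mul_mat_inv: "i \<in> {1..n} \<Longrightarrow> j \<in> {1..n} \<Longrightarrow> mat_mul n X (mat_inv n X) i j = idm i j"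
    and mat_inv_outside: "\<not> (i \<in> {1..n} \<and> j \<in> {1..n}) \<Longrightarrow> mat_inv n X i j = 0"
proof -
  obtain Y where Y: "is_UT n Y" "\<forall>i\<in>{1..n}. \<forall>j\<in>{1..n}. mat_mul n X Y i j = idm i j"
    "\<forall>i j. \<not> (i \<in> {1..n} \<and> j \<in> {1..n}) \<longrightarrow> Y i j = 0"
    using UT_right_inverse_exists[OF assms] by blast
  have "mat_inv n X = Y"
    by (rule mat_inv_eqI[OF assms]) (use Y in auto)
  thus "is_UT n (mat_inv n X)"
    and "i \<in> {1..n} \<Longrightarrow> j \<in> {1..n} \<Longrightarrow> mat_mul n X (mat_inv n X) i j = idm i j"
    and "\<not> (i \<in> {1..n} \<and> j \<in> {1..n}) \<Longrightarrow> mat_inv n X i j = 0"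
    using Y by auto
qed

lemma mat_inv_above_diag:
  assumes "is_UT n X" "1 \<le> i" "i < j" "j \<le> n"
  shows "mat_inv n X i j = - (X i j + (\<Sum>k\<in>{i<..<j}. X i k * mat_inv n X k j))"
proof -
  have "X i j + mat_inv n X i j + (\<Sum>k\<in>{i<..<j}. X i k * mat_inv n X k j) = 0"
    using mat_mul_UT_entry_above_diag[OF assms(1) is_UT_mat_inv[OF assms(1)] assms(2-4)]
      mat_mul_mat_inv[OF assms(1), of i j] assms(2-4) by (simp add: idm_def)
  thus ?thesis
    by (simp add: eq_neg_iff_add_eq_0 algebra_simps)
qed

section \<open>The products W_e and their inverses\<close>

lemma frob_mat_mul:
  fixes X Y :: "nat \<Rightarrow> nat \<Rightarrow> 'a::comm_ring_1"
  assumes "prime CHAR('a)" "p = CHAR('a)"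
  shows "mat_mul n (frob p e X) (frob p e Y) = frob p e (mat_mul n X Y)"
proof -
  have "p ^ e = CHAR('a) ^ e"
    using assms(2) by simp
  thus ?thesis
    unfolding mat_mul_def frob_def
    by (auto simp: fun_eq_iff freshmans_dream_sum'[OF assms(1)] power_mult_distrib)
qed

primrec Wseq_rev :: "nat \<Rightarrow> nat \<Rightarrow> (nat \<Rightarrow> nat \<Rightarrow> 'a::comm_ring_1) \<Rightarrow> nat \<Rightarrow> nat \<Rightarrow> nat \<Rightarrow> 'a" where
  "Wseq_rev p n C 0 = idm"
| "Wseq_rev p n C (Suc e) = mat_mul n (Wseq_rev p n C e) (frob p e C)"

lemma is_UT_Wseq_rev: "p > 0 \<Longrightarrow> is_UT n C \<Longrightarrow> is_UT n (Wseq_rev p n C e)"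
  by (induction e) (auto intro: is_UT_mat_mul is_UT_frob is_UT_idm)

lemma Wseq_mul_Wseq_rev:
  fixes B :: "nat \<Rightarrow> nat \<Rightarrow> 'a::comm_ring_1"
  assumes char: "prime CHAR('a)" "p = CHAR('a)" and UT: "is_UT n B"
    and ij: "i \<in> {1..n}" "j \<in> {1..n}"
  shows "mat_mul n (Wseq p n B e) (Wseq_rev p n (mat_inv n B) e) i j = idm i j"
  using ij
proof (induction e arbitrary: i j)
  case 0
  thus ?case by (simp add: mat_mul_idm_left)
next
  case (Suc e)
  define F where "F = frob p e B"
  define G where "G = frob p e (mat_inv n B)"
  define WV where "WV = mat_mul n (Wseq p n B e) (Wseq_rev p n (mat_inv n B) e)"
  have "mat_mul n (Wseq p n B (Suc e)) (Wseq_rev p n (mat_inv n B) (Suc e)) i j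
      = mat_mul n F (mat_mul n WV G) i j"
    by (simp add: F_def G_def WV_def mat_mul_assoc)
  also have "\<dots> = mat_mul n F G i j"
  proof (rule mat_mul_cong)
    fix k assume k: "k \<in> {1..n}"
    have "mat_mul n WV G k j = mat_mul n idm G k j"
      by (rule mat_mul_cong) (use Suc.IH k in \<open>simp_all add: WV_def\<close>)
    thus "mat_mul n WV G k j = G k j"
      using k by (simp add: mat_mul_idm_left)
  qed simp
  also have "\<dots> = idm i j ^ p ^ e"
    unfolding F_def G_def frob_mat_mul[OF char] using mat_mul_mat_inv[OF UT Suc.prems]
    by (simp add: frob_def)
  also have "\<dots> = idm i j"
    using prime_gt_0_nat[OF char(1)] char(2) by (simp add: idm_def zero_power)
  finally show ?case .
qed

lemma Wseq_rev_outside: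
  fixes C :: "nat \<Rightarrow> nat \<Rightarrow> 'a::comm_ring_1"
  assumes "p > 0" and C: "\<And>i j. \<not> (i \<in> {1..n} \<and> j \<in> {1..n}) \<Longrightarrow> C i j = 0"
  shows "\<not> (i \<in> {1..n} \<and> j \<in> {1..n}) \<Longrightarrow> Wseq_rev p n C (Suc e) i j = 0"
proof (induction e arbitrary: i j)
  case 0
  show ?case
  proof (cases "i \<in> {1..n}")
    case True
    thus ?thesis
      using 0 C assms(1) by (simp add: mat_mul_def frob_def zero_power)
  qed (simp add: mat_mul_idm_left_outside)
next
  case (Suc e)
  show ?case
  proof (cases "i \<in> {1..n}")
    case True
    thus ?thesis
      using Suc.prems C assms(1) by (simp add: mat_mul_def frob_def zero_power)
  next
    case False
    hence "Wseq_rev p n C (Suc e) i k = 0" for k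
      using Suc.IH by blast
    thus ?thesis
      by (simp add: mat_mul_def)
  qed
qed

lemma mat_inv_Wseq:
  fixes B :: "nat \<Rightarrow> nat \<Rightarrow> 'a::comm_ring_1"
  assumes char: "prime CHAR('a)" "p = CHAR('a)" and UT: "is_UT n B" and "e \<ge> 1"
  shows "mat_inv n (Wseq p n B e) = Wseq_rev p n (mat_inv n B) e"
proof (rule mat_inv_eqI)
  have "p > 0"
    using char prime_gt_0_nat by simp
  thus "is_UT n (Wseq p n B e)"
    by (rule is_UT_Wseq[OF _ UT])
  obtain e' where "e = Suc e'"
    using \<open>e \<ge> 1\<close> by (cases e) auto
  thus "Wseq_rev p n (mat_inv n B) e i j = 0" if "\<not> (i \<in> {1..n} \<and> j \<in> {1..n})" for i j
    using Wseq_rev_outside[OF \<open>p > 0\<close> mat_inv_outside[OF UT] that] by simp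
qed (rule Wseq_mul_Wseq_rev[OF char UT])

section \<open>Frobenius roots and the embedding \<iota>\<close>

locale frobenius_root =
  fixes N q :: nat
  assumes prime_char: "prime CHAR('k::alg_closed_field)"
    and q_eq_char_power: "q = CHAR('k) ^ N"
begin

lemma q_pos: "q > 0"
  using prime_char by (simp add: q_eq_char_power prime_gt_0_nat)

lemma power_q_add: "((x::'k) + y) ^ q = x ^ q + y ^ q"
  by (rule freshmans_dream'[OF prime_char q_eq_char_power])

lemma power_q_inject: "(x::'k) ^ q = y ^ q \<Longrightarrow> x = y"
  using power_q_add[of "x - y" y] by simp

lemma qroot_power [simp]: "qroot q (c::'k) ^ q = c"
proof -
  obtain y :: 'k where "y ^ q = c"
    using nth_root_exists[OF q_pos] by blast
  hence "\<exists>!y. y ^ q = c"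
    using power_q_inject by blast
  thus ?thesis
    unfolding qroot_def by (rule theI')
qed

lemma qroot_eqI: "(y::'k) ^ q = c \<Longrightarrow> qroot q c = y"
  using power_q_inject[of "qroot q c" y] by simp

lemma qroot_0 [simp]: "qroot q (0::'k) = 0"
  by (rule qroot_eqI) (simp add: q_pos)

lemma qroot_1 [simp]: "qroot q (1::'k) = 1"
  by (rule qroot_eqI) simp

lemma qroot_eq_0_iff [simp]: "qroot q (c::'k) = 0 \<longleftrightarrow> c = 0"
  by (metis qroot_0 qroot_power)

lemma qroot_add: "qroot q ((a::'k) + b) = qroot q a + qroot q b"
  by (rule qroot_eqI) (simp add: power_q_add)

lemma qroot_mult: "qroot q ((a::'k) * b) = qroot q a * qroot q b"
  by (rule qroot_eqI) (simp add: power_mult_distrib)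

lemma qroot_sum: "qroot q (\<Sum>x\<in>S. f x) = (\<Sum>x\<in>S. qroot q (f x :: 'k))"
  by (induction S rule: infinite_finite_induct) (auto simp: qroot_add)

lemma iota_nth: "fls_nth (iota q (x::'k fls)) l = qroot q (fls_nth x l)"
  unfolding iota_def
  by (rule nth_Abs_fls_lower_bound[of "fls_subdegree x"]) simp

lemma iota_0 [simp]: "iota q (0::'k fls) = 0"
  by (rule fls_eqI) (simp add: iota_nth)

lemma iota_1 [simp]: "iota q (1::'k fls) = 1"
  by (rule fls_eqI) (simp add: iota_nth)

lemma iota_add: "iota q ((x::'k fls) + y) = iota q x + iota q y"
  by (rule fls_eqI) (simp add: iota_nth qroot_add)

lemma iota_sum: "iota q (\<Sum>x\<in>S. f x) = (\<Sum>x\<in>S. iota q (f x :: 'k fls))"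
  by (induction S rule: infinite_finite_induct) (auto simp: iota_add)

lemma iota_eq_0_iff [simp]: "iota q (x::'k fls) = 0 \<longleftrightarrow> x = 0"
  by (auto simp: fls_eq_iff iota_nth)

lemma subdegree_iota [simp]: "fls_subdegree (iota q (x::'k fls)) = fls_subdegree x"
proof (cases "x = 0")
  case False
  show ?thesis
    by (rule fls_subdegree_eqI) (use False in \<open>auto simp: iota_nth\<close>)
qed simp

lemma val_iota [simp]: "val (iota q (x::'k fls)) = val x"
  by (simp add: val_def)

lemma iota_mult: "iota q ((x::'k fls) * y) = iota q x * iota q y"
  by (rule fls_eqI) (simp add: iota_nth fls_times_nth(2) qroot_sum qroot_mult)

lemma is_UT_iota: "is_UT n A \<Longrightarrow> is_UT n (\<lambda>a b. iota q (A a b :: 'k fls))"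
  by (auto simp: is_UT_def)

lemma mat_inv_iota:
  assumes UT: "is_UT n (A :: nat \<Rightarrow> nat \<Rightarrow> 'k fls)"
  shows "mat_inv n (\<lambda>a b. iota q (A a b)) = (\<lambda>a b. iota q (mat_inv n A a b))"
proof (rule mat_inv_eqI[OF is_UT_iota[OF UT]])
  fix a b assume ab: "a \<in> {1..n}" "b \<in> {1..n}"
  have "mat_mul n (\<lambda>a b. iota q (A a b)) (\<lambda>a b. iota q (mat_inv n A a b)) a b
      = iota q (mat_mul n A (mat_inv n A) a b)"
    by (simp add: mat_mul_def iota_sum iota_mult)
  also have "\<dots> = idm a b"
    using mat_mul_mat_inv[OF UT ab] by (simp add: idm_def)
  finally show "mat_mul n (\<lambda>a b. iota q (A a b)) (\<lambda>a b. iota q (mat_inv n A a b)) a b = idm a b" .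
qed (simp add: mat_inv_outside[OF UT])

end

section \<open>Entry bounds governed by a superadditive weight\<close>

definition is_pole_order :: "ereal \<Rightarrow> bool" where
  "is_pole_order z \<longleftrightarrow> z = - \<infinity> \<or> (\<exists>m::int. m \<ge> 1 \<and> z = ereal (of_int m))"

lemma weighted_sum_le:
  fixes a b x y z :: int
  assumes "x \<ge> 1" "y \<ge> 1" "x + y \<le> z" "a \<ge> 0" "b \<ge> 0"
  shows "a * x + b * y \<le> max a b * z - \<bar>a - b\<bar>"
proof (cases "b \<le> a")
  case True
  have "a * (x + y) \<le> a * z" "(a - b) * 1 \<le> (a - b) * y"
    using True assms by (intro mult_left_mono; simp)+
  hence "a * x + b * y \<le> a * z - (a - b)"
    by (simp add: algebra_simps)
  thus ?thesis
    using True by simp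
next
  case False
  have "b * (x + y) \<le> b * z" "(b - a) * 1 \<le> (b - a) * x"
    using False assms by (intro mult_left_mono; simp)+
  hence "a * x + b * y \<le> b * z - (b - a)"
    by (simp add: algebra_simps)
  thus ?thesis
    using False by simp
qed

locale superadditive_weight =
  fixes n :: nat and \<mu> :: "nat \<Rightarrow> nat \<Rightarrow> ereal"
  assumes is_pole_order_weight: "1 \<le> i \<Longrightarrow> i < j \<Longrightarrow> j \<le> n \<Longrightarrow> is_pole_order (\<mu> i j)"
    and weight_superadditive: "1 \<le> i \<Longrightarrow> i < k \<Longrightarrow> k < j \<Longrightarrow> j \<le> n \<Longrightarrow> \<mu> i k + \<mu> k j \<le> \<mu> i j"
begin

definition supp :: "nat \<Rightarrow> nat \<Rightarrow> bool" where
  "supp i j \<longleftrightarrow> \<mu> i j \<noteq> - \<infinity>"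

definition weight :: "nat \<Rightarrow> nat \<Rightarrow> int" where
  "weight i j = \<lfloor>real_of_ereal (\<mu> i j)\<rfloor>"

lemma weight_eq:
  assumes "1 \<le> i" "i < j" "j \<le> n" "supp i j"
  shows "\<mu> i j = ereal (of_int (weight i j))" and weight_pos: "weight i j \<ge> 1"
  using is_pole_order_weight[OF assms(1-3)] assms(4)
  by (auto simp: is_pole_order_def supp_def weight_def)

lemma supp_trans_weight_superadditive:
  assumes "1 \<le> i" "i < k" "k < j" "j \<le> n" "supp i k" "supp k j"
  shows supp_trans: "supp i j" and "weight i k + weight k j \<le> weight i j"
proof -
  have le: "ereal (of_int (weight i k + weight k j)) \<le> \<mu> i j"
    using weight_superadditive[OF assms(1-4)] weight_eq(1)[of i k] weight_eq(1)[of k j] assms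
    by simp
  thus "supp i j"
    by (auto simp: supp_def)
  thus "weight i k + weight k j \<le> weight i j"
    using le weight_eq(1)[of i j] assms by simp
qed

definition supp_val_ge :: "nat \<Rightarrow> nat \<Rightarrow> 'a::field fls \<Rightarrow> int \<Rightarrow> bool" where
  "supp_val_ge i j x r \<longleftrightarrow> (if supp i j then val_ge x r else x = 0)"

lemma supp_val_ge_0 [simp]: "supp_val_ge i j 0 r"
  by (simp add: supp_val_ge_def)

lemma supp_val_ge_add: "supp_val_ge i j x r \<Longrightarrow> supp_val_ge i j y r \<Longrightarrow> supp_val_ge i j (x + y) r"
  by (simp add: supp_val_ge_def val_ge_add split: if_splits)

lemma supp_val_ge_uminus [simp]: "supp_val_ge i j (- x) r = supp_val_ge i j x r"
  by (simp add: supp_val_ge_def)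

lemma supp_val_ge_sum:
  "(\<And>k. k \<in> S \<Longrightarrow> supp_val_ge i j (f k) r) \<Longrightarrow> supp_val_ge i j (\<Sum>k\<in>S. f k) r"
  by (induction S rule: infinite_finite_induct) (auto intro: supp_val_ge_add)

lemma supp_val_ge_mono:
  "supp_val_ge i j x r \<Longrightarrow> (supp i j \<Longrightarrow> r' \<le> r) \<Longrightarrow> supp_val_ge i j x r'"
  by (auto simp: supp_val_ge_def intro: val_ge_mono split: if_splits)

lemma supp_val_ge_mult:
  assumes ikj: "1 \<le> i" "i < k" "k < j" "j \<le> n"
    and x: "supp_val_ge i k x (- (int a * weight i k))"
    and y: "supp_val_ge k j y (- (int b * weight k j))"
  shows "supp_val_ge i j (x * y) (- (int (max a b) * weight i j) + \<bar>int a - int b\<bar>)"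
proof (cases "supp i k \<and> supp k j")
  case True
  hence "val_ge (x * y) (- (int a * weight i k) + - (int b * weight k j))"
    using x y by (intro val_ge_mult) (simp_all add: supp_val_ge_def)
  moreover have "int a * weight i k + int b * weight k j
      \<le> int (max a b) * weight i j - \<bar>int a - int b\<bar>"
    using weighted_sum_le[of "weight i k" "weight k j" "weight i j" "int a" "int b"]
      weight_pos[of i k] weight_pos[of k j] supp_trans_weight_superadditive(2)[OF ikj] True ikj
    by (simp add: of_nat_max)
  ultimately show ?thesis
    using supp_trans[OF ikj] True by (simp add: supp_val_ge_def val_ge_mono)
qed (use x y in \<open>auto simp: supp_val_ge_def\<close>)

text \<open>
  \<open>bounded a X\<close> and \<open>congruent a X Y\<close> are integer forms of \<open>- a \<mu> i j \<le> val (X i j)\<close> and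
  \<open>- a \<mu> i j + 1 \<le> val (X i j - Y i j)\<close> above the diagonal; where \<open>\<mu> i j = -\<infinity>\<close> they force
  the entry to vanish.
\<close>

definition bounded :: "nat \<Rightarrow> (nat \<Rightarrow> nat \<Rightarrow> 'a::field fls) \<Rightarrow> bool" where
  "bounded a X \<longleftrightarrow>
    (\<forall>i j. 1 \<le> i \<and> i < j \<and> j \<le> n \<longrightarrow> supp_val_ge i j (X i j) (- (int a * weight i j)))"

definition congruent :: "nat \<Rightarrow> (nat \<Rightarrow> nat \<Rightarrow> 'a::field fls) \<Rightarrow> (nat \<Rightarrow> nat \<Rightarrow> 'a fls) \<Rightarrow> bool" where
  "congruent a X Y \<longleftrightarrow>
    (\<forall>i j. 1 \<le> i \<and> i < j \<and> j \<le> n \<longrightarrow> supp_val_ge i j (X i j - Y i j) (- (int a * weight i j) + 1))"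

lemma boundedD: "bounded a X \<Longrightarrow> 1 \<le> i \<Longrightarrow> i < j \<Longrightarrow> j \<le> n \<Longrightarrow> supp_val_ge i j (X i j) (- (int a * weight i j))"
  by (simp add: bounded_def)

lemma congruentD:
  "congruent a X Y \<Longrightarrow> 1 \<le> i \<Longrightarrow> i < j \<Longrightarrow> j \<le> n \<Longrightarrow>
    supp_val_ge i j (X i j - Y i j) (- (int a * weight i j) + 1)"
  by (simp add: congruent_def)

lemma bounded_oneI:
  assumes "\<And>i j. 1 \<le> i \<Longrightarrow> i < j \<Longrightarrow> j \<le> n \<Longrightarrow> - \<mu> i j \<le> val (X i j)"
  shows "bounded 1 X"
  unfolding bounded_def
proof (intro allI impI, elim conjE)
  fix i j assume ij: "1 \<le> i" "i < j" "j \<le> n"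
  show "supp_val_ge i j (X i j) (- (int 1 * weight i j))"
  proof (cases "supp i j")
    case True
    thus ?thesis
      using assms[OF ij] weight_eq(1)[OF ij True] by (simp add: supp_val_ge_def val_ge_iff)
  next
    case False
    thus ?thesis
      using assms[OF ij] by (simp add: supp_val_ge_def supp_def val_def split: if_splits)
  qed
qed

lemma bounded_idm: "bounded 0 idm"
  by (simp add: bounded_def idm_def)

lemma bounded_frob:
  assumes "bounded a B" "p > 0"
  shows "bounded (p ^ e * a) (frob p e B)"
  unfolding bounded_def frob_def
proof (intro allI impI)
  fix i j assume "1 \<le> i \<and> i < j \<and> j \<le> n"
  hence B: "supp_val_ge i j (B i j) (- (int a * weight i j))"
    using assms(1) by (simp add: bounded_def)
  show "supp_val_ge i j (B i j ^ p ^ e) (- (int (p ^ e * a) * weight i j))"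
  proof (cases "supp i j")
    case True
    hence "val_ge (B i j ^ p ^ e) (int (p ^ e) * - (int a * weight i j))"
      using B by (intro val_ge_power) (simp add: supp_val_ge_def)
    thus ?thesis
      using True by (simp add: supp_val_ge_def algebra_simps)
  qed (use B assms(2) in \<open>simp add: supp_val_ge_def zero_power\<close>)
qed

lemma bounded_congruent:
  assumes "bounded a X" "congruent a Y X"
  shows "bounded a Y"
  unfolding bounded_def
proof (intro allI impI, elim conjE)
  fix i j assume ij: "1 \<le> i" "i < j" "j \<le> n"
  have "supp_val_ge i j (Y i j - X i j) (- (int a * weight i j))"
    by (rule supp_val_ge_mono[OF congruentD[OF assms(2) ij]]) simp
  hence "supp_val_ge i j (X i j + (Y i j - X i j)) (- (int a * weight i j))"
    by (rule supp_val_ge_add[OF boundedD[OF assms(1) ij]])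
  thus "supp_val_ge i j (Y i j) (- (int a * weight i j))"
    by simp
qed

lemma supp_val_ge_interior_sum:
  assumes X: "bounded a X" and Y: "bounded b Y" and "a \<noteq> b" and ij: "1 \<le> i" "i < j" "j \<le> n"
  shows "supp_val_ge i j (\<Sum>k\<in>{i<..<j}. X i k * Y k j) (- (int (max a b) * weight i j) + 1)"
proof (rule supp_val_ge_sum)
  fix k assume "k \<in> {i<..<j}"
  hence ikj: "1 \<le> i" "i < k" "k < j" "j \<le> n"
    using ij by auto
  have "supp_val_ge i j (X i k * Y k j) (- (int (max a b) * weight i j) + \<bar>int a - int b\<bar>)"
    using supp_val_ge_mult[OF ikj boundedD[OF X] boundedD[OF Y]] ikj by simp
  thus "supp_val_ge i j (X i k * Y k j) (- (int (max a b) * weight i j) + 1)"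
    by (rule supp_val_ge_mono) (use \<open>a \<noteq> b\<close> in auto)
qed

lemma supp_val_ge_smaller_scale:
  assumes "bounded b Y" "b < a" "1 \<le> i" "i < j" "j \<le> n"
  shows "supp_val_ge i j (Y i j) (- (int a * weight i j) + 1)"
proof (rule supp_val_ge_mono[OF boundedD[OF assms(1,3-5)]])
  assume "supp i j"
  hence "(int b + 1) * weight i j \<le> int a * weight i j"
    using weight_pos[OF assms(3-5)] \<open>b < a\<close> by (intro mult_right_mono) auto
  thus "- (int a * weight i j) + 1 \<le> - (int b * weight i j)"
    using weight_pos[OF assms(3-5) \<open>supp i j\<close>] by (simp add: distrib_right)
qed

lemma congruent_mul_left:
  assumes "is_UT n X" "is_UT n Y" "bounded a X" "bounded b Y" "b < a"
  shows "congruent a (mat_mul n X Y) X"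
  unfolding congruent_def
proof (intro allI impI, elim conjE)
  fix i j assume ij: "1 \<le> i" "i < j" "j \<le> n"
  have "mat_mul n X Y i j - X i j = Y i j + (\<Sum>k\<in>{i<..<j}. X i k * Y k j)"
    using mat_mul_UT_entry_above_diag[OF assms(1,2) ij] by simp
  moreover have "supp_val_ge i j (\<Sum>k\<in>{i<..<j}. X i k * Y k j) (- (int a * weight i j) + 1)"
    using supp_val_ge_interior_sum[OF assms(3,4) _ ij] \<open>b < a\<close> by (simp add: max_def)
  ultimately show "supp_val_ge i j (mat_mul n X Y i j - X i j) (- (int a * weight i j) + 1)"
    using supp_val_ge_add[OF supp_val_ge_smaller_scale[OF assms(4,5) ij]] by simp
qed

lemma congruent_mul_right:
  assumes "is_UT n X" "is_UT n Y" "bounded a X" "bounded b Y" "a < b"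
  shows "congruent b (mat_mul n X Y) Y"
  unfolding congruent_def
proof (intro allI impI, elim conjE)
  fix i j assume ij: "1 \<le> i" "i < j" "j \<le> n"
  have "mat_mul n X Y i j - Y i j = X i j + (\<Sum>k\<in>{i<..<j}. X i k * Y k j)"
    using mat_mul_UT_entry_above_diag[OF assms(1,2) ij] by simp
  moreover have "supp_val_ge i j (\<Sum>k\<in>{i<..<j}. X i k * Y k j) (- (int b * weight i j) + 1)"
    using supp_val_ge_interior_sum[OF assms(3,4) _ ij] \<open>a < b\<close> by (simp add: max_def)
  ultimately show "supp_val_ge i j (mat_mul n X Y i j - Y i j) (- (int b * weight i j) + 1)"
    using supp_val_ge_add[OF supp_val_ge_smaller_scale[OF assms(3,5) ij]] by simp
qed

lemma bounded_mat_inv: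
  assumes UT: "is_UT n B" and B: "bounded 1 B"
  shows "bounded 1 (mat_inv n B)"
proof -
  have "supp_val_ge i j (mat_inv n B i j) (- weight i j)" if "1 \<le> i" "i < j" "j \<le> n" for i j
    using that
  proof (induction "j - i" arbitrary: i rule: less_induct)
    case less
    have "supp_val_ge i j (B i k * mat_inv n B k j) (- weight i j)" if "k \<in> {i<..<j}" for k
    proof -
      have ikj: "1 \<le> i" "i < k" "k < j" "j \<le> n"
        using that less.prems by auto
      have "supp_val_ge i k (B i k) (- (int 1 * weight i k))"
        using boundedD[OF B, of i k] ikj by simp
      moreover have "supp_val_ge k j (mat_inv n B k j) (- (int 1 * weight k j))"
        using less.hyps[of k] ikj by simp
      ultimately show ?thesis
        using supp_val_ge_mult[OF ikj] by fastforce
    qed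
    hence "supp_val_ge i j (B i j + (\<Sum>k\<in>{i<..<j}. B i k * mat_inv n B k j)) (- weight i j)"
      using boundedD[OF B less.prems] by (intro supp_val_ge_add supp_val_ge_sum) auto
    thus ?case
      unfolding mat_inv_above_diag[OF UT less.prems] supp_val_ge_uminus .
  qed
  thus ?thesis
    by (simp add: bounded_def)
qed

lemma congruent_frob_chain:
  assumes "p \<ge> 2" "bounded 1 B" "bounded 0 (S 0)"
    and step: "\<And>b e. bounded b (S e) \<Longrightarrow> b < p ^ e \<Longrightarrow> congruent (p ^ e) (S (Suc e)) (frob p e B)"
  shows "congruent (p ^ e) (S (Suc e)) (frob p e B)"
proof -
  have bounded_step: "bounded (p ^ e) (S (Suc e))" if "bounded b (S e)" "b < p ^ e" for b e
    using bounded_frob[OF assms(2), of p e] assms(1) bounded_congruent step[OF that] by simp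
  have bounded_S: "bounded (p ^ e) (S (Suc e))" for e
  proof (induction e)
    case 0
    show ?case
      using bounded_step[OF assms(3)] by simp
  next
    case (Suc e)
    show ?case
      by (rule bounded_step[OF Suc.IH]) (use assms(1) in simp)
  qed
  show ?thesis
  proof (cases e)
    case 0
    thus ?thesis
      using step[OF assms(3)] by simp
  next
    case (Suc e')
    thus ?thesis
      using step[OF bounded_S[of e']] assms(1) by simp
  qed
qed

lemma Wseq_congruent_frob:
  assumes "p \<ge> 2" "is_UT n B" "bounded 1 B"
  shows "congruent (p ^ e) (Wseq p n B (Suc e)) (frob p e B)"
proof (rule congruent_frob_chain[OF assms(1,3)])
  fix b e assume step: "bounded b (Wseq p n B e)" "b < p ^ e"
  have p: "p > 0"
    using assms(1) by simp
  have F: "bounded (p ^ e) (frob p e B)"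
    using bounded_frob[OF assms(3) p] by simp
  show "congruent (p ^ e) (Wseq p n B (Suc e)) (frob p e B)"
    using congruent_mul_left[OF is_UT_frob[OF p assms(2)] is_UT_Wseq[OF p assms(2)] F step] by simp
qed (simp add: bounded_idm)

lemma Wseq_rev_congruent_frob:
  assumes "p \<ge> 2" "is_UT n C" "bounded 1 C"
  shows "congruent (p ^ e) (Wseq_rev p n C (Suc e)) (frob p e C)"
proof (rule congruent_frob_chain[OF assms(1,3)])
  fix b e assume step: "bounded b (Wseq_rev p n C e)" "b < p ^ e"
  have p: "p > 0"
    using assms(1) by simp
  have F: "bounded (p ^ e) (frob p e C)"
    using bounded_frob[OF assms(3) p] by simp
  show "congruent (p ^ e) (Wseq_rev p n C (Suc e)) (frob p e C)"
    using congruent_mul_right[OF is_UT_Wseq_rev[OF p assms(2)] is_UT_frob[OF p assms(2)] step(1) F step(2)] by simp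
qed (simp add: bounded_idm)

lemma val_estimates_of_congruent:
  assumes B: "bounded 1 B" and W: "congruent (p ^ e) W (frob p e B)" and "p > 0"
    and ij: "1 \<le> i" "i < j" "j \<le> n"
  defines "c \<equiv> ereal (real (p ^ e))"
  shows "val (W i j - B i j ^ p ^ e) \<ge> - (c * \<mu> i j) + 1 \<and> val (W i j) \<ge> - (c * \<mu> i j)
    \<and> (val (W i j) = - (c * \<mu> i j) \<longleftrightarrow> val (B i j) = - \<mu> i j)"
proof (cases "supp i j")
  case True
  define P where "P = p ^ e"
  have "P > 0"
    using \<open>p > 0\<close> by (simp add: P_def)
  have x: "val_ge (B i j) (- weight i j)"
    using boundedD[OF B ij] True by (simp add: supp_val_ge_def)
  have d: "val_ge (W i j - B i j ^ P) (- (int P * weight i j) + 1)"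
    using congruentD[OF W ij] True by (simp add: supp_val_ge_def frob_def P_def)
  have "val_ge (B i j ^ P + (W i j - B i j ^ P)) (- (int P * weight i j))"
    using val_ge_power[OF x, of P] by (intro val_ge_add val_ge_mono[OF d]) simp_all
  hence w: "val_ge (W i j) (- (int P * weight i j))"
    by simp
  have "c * \<mu> i j = ereal (of_int (int P * weight i j))"
    using weight_eq(1)[OF ij True] by (simp add: c_def P_def)
  moreover have "- \<mu> i j = ereal (of_int (- weight i j))"
    using weight_eq(1)[OF ij True] by simp
  ultimately show ?thesis
    using val_power_add_eq_iff[OF x d \<open>P > 0\<close>] w d
    by (simp add: val_ge_iff P_def)
next
  case False
  hence "B i j = 0" "W i j - B i j ^ p ^ e = 0"
    using boundedD[OF B ij] congruentD[OF W ij] by (simp_all add: supp_val_ge_def frob_def)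
  moreover have "c * \<mu> i j = - \<infinity>"
    using False \<open>p > 0\<close> by (simp add: supp_def c_def)
  ultimately show ?thesis
    using \<open>p > 0\<close> False by (simp add: val_def supp_def c_def)
qed

lemma Wseq_val_estimates:
  fixes B :: "nat \<Rightarrow> nat \<Rightarrow> 'a::field fls"
  assumes "prime CHAR('a)" "p = CHAR('a)" "is_UT n B" "bounded 1 B" "e \<ge> 1"
    and ij: "1 \<le> i" "i < j" "j \<le> n"
  defines "c \<equiv> ereal (real (p ^ (e - 1)))" and "W \<equiv> Wseq p n B e" and "C \<equiv> mat_inv n B"
  shows "val (W i j - B i j ^ p ^ (e - 1)) \<ge> - (c * \<mu> i j) + 1 \<and> val (W i j) \<ge> - (c * \<mu> i j)
    \<and> (val (W i j) = - (c * \<mu> i j) \<longleftrightarrow> val (B i j) = - \<mu> i j)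
    \<and> val (mat_inv n W i j - C i j ^ p ^ (e - 1)) \<ge> - (c * \<mu> i j) + 1
    \<and> val (mat_inv n W i j) \<ge> - (c * \<mu> i j)
    \<and> (val (mat_inv n W i j) = - (c * \<mu> i j) \<longleftrightarrow> val (C i j) = - \<mu> i j)"
proof -
  have p: "p \<ge> 2" "prime CHAR('a fls)" "p = CHAR('a fls)"
    using assms(1,2) prime_ge_2_nat by auto
  have C: "is_UT n C" "bounded 1 C"
    using is_UT_mat_inv bounded_mat_inv assms(3,4) by (auto simp: C_def)
  obtain e' where e: "e = Suc e'"
    using \<open>e \<ge> 1\<close> by (cases e) auto
  have "mat_inv n W = Wseq_rev p n C e"
    unfolding W_def C_def by (rule mat_inv_Wseq[OF p(2,3) assms(3,5)])
  thus ?thesis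
    using val_estimates_of_congruent[OF assms(4) Wseq_congruent_frob[OF p(1) assms(3,4)] _ ij, of e']
      val_estimates_of_congruent[OF C(2) Wseq_rev_congruent_frob[OF p(1) C] _ ij, of e'] p(1)
    unfolding c_def W_def e by (simp del: Wseq.simps Wseq_rev.simps)
qed

end

section \<open>The maximal partition weight \<mu>\<close>

lemma m_part_singleton [simp]: "m_part A [x] = 0"
  by (simp add: m_part_def)

lemma m_part_Cons_Cons: "m_part A (x # y # ls) = mexp A x y + m_part A (y # ls)"
  unfolding m_part_def by (simp add: sum.lessThan_Suc_shift del: sum.lessThan_Suc)

lemma m_part_append_tl:
  assumes "ls1 \<noteq> []" "ls2 \<noteq> []" "last ls1 = hd ls2"
  shows "m_part A (ls1 @ tl ls2) = m_part A ls1 + m_part A ls2"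
  using assms
proof (induction ls1 rule: induct_list012)
  case (2 x)
  thus ?case by (cases ls2) auto
next
  case (3 x y ls)
  thus ?case
    by (simp add: m_part_Cons_Cons[of A x y "ls @ tl ls2", simplified] m_part_Cons_Cons add.assoc)
qed simp

lemma sorted_wrt_less_hd_last:
  assumes "sorted_wrt (<) (ls :: nat list)" "x \<in> set ls"
  shows "hd ls \<le> x \<and> x \<le> last ls"
proof
  show "hd ls \<le> x"
    using assms by (cases ls) auto
  obtain ys y where "ls = ys @ [y]"
    using assms(2) by (cases ls rule: rev_exhaust) auto
  thus "x \<le> last ls"
    using assms by (auto simp: sorted_wrt_append)
qed

lemma partitions_subset: "ls \<in> partitions i j \<Longrightarrow> set ls \<subseteq> {i..j}"
  using sorted_wrt_less_hd_last by (fastforce simp: partitions_def)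

lemma finite_partitions: "finite (partitions i j)"
proof (rule finite_subset)
  show "partitions i j \<subseteq> {ls. set ls \<subseteq> {i..j} \<and> length ls \<le> card {i..j}}"
  proof
    fix ls assume ls: "ls \<in> partitions i j"
    have "distinct ls"
      using ls by (simp add: partitions_def strict_sorted_iff)
    hence "length ls \<le> card {i..j}"
      using card_mono[OF _ partitions_subset[OF ls]] by (simp add: distinct_card[symmetric])
    thus "ls \<in> {ls. set ls \<subseteq> {i..j} \<and> length ls \<le> card {i..j}}"
      using partitions_subset[OF ls] by simp
  qed
qed (rule finite_lists_length_le, simp)

lemma pair_in_partitions: "i < j \<Longrightarrow> [i, j] \<in> partitions i j"
  by (simp add: partitions_def)

lemma partitions_append_tl:
  assumes "ls1 \<in> partitions i k" "ls2 \<in> partitions k j" "k < j"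
  shows "ls1 @ tl ls2 \<in> partitions i j"
proof -
  obtain r where ls2: "ls2 = k # r"
    using assms(2) by (cases ls2) (auto simp: partitions_def)
  have "r \<noteq> []"
    using assms(2,3) ls2 by (auto simp: partitions_def)
  have "x \<le> k" if "x \<in> set ls1" for x
    using partitions_subset[OF assms(1)] that by auto
  moreover have "k < y" if "y \<in> set r" for y
    using assms(2) ls2 that by (simp add: partitions_def)
  ultimately show ?thesis
    using assms ls2 \<open>r \<noteq> []\<close> by (auto simp: partitions_def sorted_wrt_append intro: le_less_trans)
qed

lemma mu_attained:
  assumes "i < j"
  obtains ls where "ls \<in> partitions i j" "mu A i j = m_part A ls"
proof -
  have "mu A i j \<in> m_part A ` partitions i j"
    unfolding mu_def using finite_partitions pair_in_partitions[OF assms] by (intro Max_in) auto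
  thus ?thesis
    using that by blast
qed

lemma mu_ge_m_part: "ls \<in> partitions i j \<Longrightarrow> m_part A ls \<le> mu A i j"
  unfolding mu_def by (simp add: finite_partitions)

lemma mexp_le_mu: "i < j \<Longrightarrow> mexp A i j \<le> mu A i j"
  using mu_ge_m_part[OF pair_in_partitions] by (simp add: m_part_Cons_Cons)

lemma neg_mu_le_val: "i < j \<Longrightarrow> - mu A i j \<le> val (A i j)"
  using mexp_le_mu[of i j A] by (simp add: mexp_def ereal_uminus_le_reorder)

lemma mu_superadditive:
  assumes "i < k" "k < j"
  shows "mu A i k + mu A k j \<le> mu A i j"
proof -
  obtain ls1 ls2 where ls: "ls1 \<in> partitions i k" "mu A i k = m_part A ls1"
    "ls2 \<in> partitions k j" "mu A k j = m_part A ls2"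
    using mu_attained[OF assms(1)] mu_attained[OF assms(2)] by metis
  have "m_part A (ls1 @ tl ls2) = m_part A ls1 + m_part A ls2"
    using ls by (intro m_part_append_tl) (auto simp: partitions_def)
  thus ?thesis
    using mu_ge_m_part[where A = A, OF partitions_append_tl[OF ls(1,3) assms(2)]] ls by simp
qed

lemma is_pole_order_add: "is_pole_order a \<Longrightarrow> is_pole_order b \<Longrightarrow> is_pole_order (a + b)"
  unfolding is_pole_order_def by (elim disjE exE conjE) (auto intro!: exI[of _ "_ + _"])

context
  fixes n :: nat and A :: "nat \<Rightarrow> nat \<Rightarrow> 'a::field fls"
  assumes coef_nonneg_eq_0: "\<And>i j l. 1 \<le> i \<Longrightarrow> i < j \<Longrightarrow> j \<le> n \<Longrightarrow> l \<ge> 0 \<Longrightarrow> coef (A i j) l = 0"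
begin

lemma is_pole_order_mexp:
  assumes "1 \<le> i" "i < j" "j \<le> n"
  shows "is_pole_order (mexp A i j)"
proof (cases "A i j = 0")
  case False
  have "fls_subdegree (A i j) < 0"
  proof (rule ccontr)
    assume "\<not> fls_subdegree (A i j) < 0"
    hence "coef (A i j) (fls_subdegree (A i j)) = 0"
      using coef_nonneg_eq_0 assms by simp
    thus False
      using nth_fls_subdegree_nonzero[OF False] by (simp add: coef_def)
  qed
  thus ?thesis
    using False by (auto simp: is_pole_order_def mexp_def val_def intro!: exI[of _ "- fls_subdegree (A i j)"])
qed (simp add: is_pole_order_def mexp_def val_def)

lemma is_pole_order_m_part:
  "sorted_wrt (<) ls \<Longrightarrow> set ls \<subseteq> {1..n} \<Longrightarrow> length ls \<ge> 2 \<Longrightarrow> is_pole_order (m_part A ls)"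
proof (induction ls rule: induct_list012)
  case (3 x y ls)
  have "is_pole_order (mexp A x y)"
    using 3 by (intro is_pole_order_mexp) auto
  moreover have "is_pole_order (m_part A (y # ls))" if "ls \<noteq> []"
    using 3(2) 3(3-5) that by (cases ls) auto
  ultimately show ?case
    by (cases ls) (simp_all add: m_part_Cons_Cons is_pole_order_add)
qed simp_all

lemma superadditive_weight_mu: "superadditive_weight n (mu A)"
proof
  fix i j assume ij: "1 \<le> i" "i < j" "j \<le> n"
  then obtain ls where "ls \<in> partitions i j" "mu A i j = m_part A ls"
    using mu_attained by blast
  moreover have "length ls \<ge> 2"
    using \<open>ls \<in> partitions i j\<close> ij by (cases ls; cases "tl ls") (auto simp: partitions_def)
  ultimately show "is_pole_order (mu A i j)"
    using partitions_subset[of ls i j] ij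
    by (auto simp: partitions_def intro!: is_pole_order_m_part)
qed (rule mu_superadditive)

end

theorem lemma16:
  fixes p n N e i j :: nat
    and A :: "nat \<Rightarrow> nat \<Rightarrow> 'k::alg_closed_field fls"
  assumes "prime p" and "CHAR('k) = p"
    and "n \<ge> 2"
    and "is_UT n A"
    and "\<forall>i j l. 1 \<le> i \<and> i < j \<and> j \<le> n \<and> (int p dvd l \<or> l \<ge> 0) \<longrightarrow> coef (A i j) l = 0"
    and "\<exists>mA::real. - vUT n A = ereal mA \<and>
           real N > log (real p) (real n * (real p ^ (n * (n - 1) div 2) + 1) * mA + real p)
                    + real n * (real n - 1) / 2"
    and "1 \<le> e" and "e \<le> N"
    and "1 \<le> i" and "i < j" and "j \<le> n"
  shows
   "let q = p ^ N;
        AR = (\<lambda>a b. iota q (A a b));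
        W = Wseq p n AR e;
        Winv = mat_inv n W;
        ARinv = mat_inv n AR;
        Ainv = mat_inv n A;
        c = ereal (real (p ^ (e - 1)));
        \<mu> = mu A i j
    in val (W i j - AR i j ^ (p ^ (e - 1))) \<ge> - (c * \<mu>) + 1
     \<and> val (W i j) \<ge> - (c * \<mu>)
     \<and> (val (W i j) = - (c * \<mu>) \<longleftrightarrow> mexp A i j = \<mu>)
     \<and> val (Winv i j - ARinv i j ^ (p ^ (e - 1))) \<ge> - (c * \<mu>) + 1
     \<and> val (Winv i j) \<ge> - (c * \<mu>)
     \<and> (val (Winv i j) = - (c * \<mu>) \<longleftrightarrow> val (Ainv i j) = - \<mu>)"
proof -
  interpret frobenius_root N "p ^ N"
    using assms(1,2) by unfold_locales auto
  interpret superadditive_weight n "mu A"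
    using assms(5) by (intro superadditive_weight_mu) auto
  have "bounded 1 (\<lambda>a b. iota (p ^ N) (A a b))"
    using neg_mu_le_val by (intro bounded_oneI) simp
  from Wseq_val_estimates[OF _ _ is_UT_iota[OF assms(4)] this assms(7,9-11)]
  show ?thesis
    using assms(1,2) by (simp add: Let_def mat_inv_iota[OF assms(4)] mexp_def ereal_uminus_eq_reorder)
qed

end
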